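(* Let $(a_n)_{n\ge 0}$ be the sequence of real numbers defined by $a_0=a_1=0$, $a_2=1$ and, for $n\ge 3$, \[ a_n \;=\; \tfrac{19}{12}(n+1)-3 \;+\; \frac{6}{n^2(n-1)}\sum_{p=1}^{n}(p-1)(n-p)\,a_{p-1}. \] Then for all $n\ge 4$, \[ a_n \;=\; \tfrac{19}{6}n-\tfrac{37}{5}H_n+\tfrac{1183}{100}-\tfrac{37}{5}\,\frac{H_n}{n}-\tfrac{71}{300}\,\frac1n , \] and in particular $a_n\sim \tfrac{19}{6}n$ as $n\to\infty$.
   Context: $H_n=\sum_{k=1}^n 1/k$ denotes the $n$-th harmonic number. (In the paper, $a_n=\mathbb E[C_n]$ is the expected number of key comparisons made by Quickselect using Yaroslavskiy's dual-pivot partitioning when searching for a uniformly random rank in a uniformly random permutation of $n$ distinct keys; $\tfrac{19}{12}(n+1)-3$ is the expected number of comparisons of one partitioning step.) *)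

theory Defs
  imports "HOL-Analysis.Analysis" "HOL-Library.Landau_Symbols"
begin

end

theory Submission imports Defs "HOL-Real_Asymp.Real_Asymp" begin

(* The recurrence  a n = toll n + 6/(n^2 (n-1)) * S n  involves the full history
   a 0, ..., a (n-1) through the weighted sum  S n = \<Sum>k<n. k (n-1-k) a k.  Multiplying
   out, the "scaled" value  (a n - toll n) n^2 (n-1) / 6  equals S n, and the second
   difference of S is  n * a n.  This turns the full-history recurrence into a
   second-order recurrence relating a n, a (n+1), a (n+2), which determines a (n+2)
   from its two predecessors.  The claimed closed form, as a function of n and harm n,
   satisfies the same second-order recurrence by a purely algebraic identity, and it
   agrees with a at n = 4 and n = 5 (computed from the recurrence).  Hence the two
   sequences coincide for n \<ge> 4.  The asymptotic equivalence follows from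
   harm n / n \<longrightarrow> 0. *)

text \<open>Toll function: expected number of comparisons of one partitioning step.\<close>
definition toll :: "real \<Rightarrow> real" where
  "toll m = 19/12 * (m + 1) - 3"

definition scaled :: "real \<Rightarrow> real \<Rightarrow> real" where
  "scaled x m = (x - toll m) * m^2 * (m - 1) / 6"

text \<open>The closed form, with an arbitrary real H standing in for the harmonic number.\<close>
definition closed_form :: "real \<Rightarrow> real \<Rightarrow> real" where
  "closed_form m H = 19/6 * m - 37/5 * H + 1183/100 - 37/5 * H / m - 71/300 * (1 / m)"

text \<open>The history term of the recurrence, written with index k = p - 1.\<close>
definition weighted_sum :: "(nat \<Rightarrow> real) \<Rightarrow> nat \<Rightarrow> real" where
  "weighted_sum a n = (\<Sum>k<n. real k * (real n - 1 - real k) * a k)"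

definition second_order_rec :: "nat \<Rightarrow> real \<Rightarrow> real \<Rightarrow> real \<Rightarrow> bool" where
  "second_order_rec n u v w \<longleftrightarrow>
     scaled w (real n + 2) - 2 * scaled v (real n + 1) + scaled u (real n) = real n * u"

lemma recurrence_sum_eq_weighted_sum:
  "(\<Sum>p=1..n. (real p - 1) * (real n - real p) * a (p - 1)) = weighted_sum a n"
proof -
  have shift: "(\<Sum>p=1..n. g p) = (\<Sum>k<n. g (Suc k))" for g :: "nat \<Rightarrow> real"
    by (induction n) auto
  show ?thesis
    unfolding shift weighted_sum_def by (simp add: algebra_simps)
qed

text \<open>Taking differences twice removes the full history: the first difference is
  \<Sum>k<n. k a k, the second one is n a n.\<close>
lemma weighted_sum_first_difference:
  "weighted_sum a (Suc n) - weighted_sum a n = (\<Sum>k<n. real k * a k)"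
  unfolding weighted_sum_def by (simp add: sum_subtractf[symmetric] algebra_simps)

lemma weighted_sum_second_difference:
  "weighted_sum a (n + 2) - 2 * weighted_sum a (n + 1) + weighted_sum a n = real n * a n"
  using weighted_sum_first_difference[of a "Suc n"] weighted_sum_first_difference[of a n]
  by (simp add: algebra_simps)

text \<open>The full-history recurrence implies the second-order recurrence wherever it
  holds at three consecutive indices (n \<ge> 2 keeps the normalising factor nonzero).\<close>
lemma full_history_second_order_rec:
  fixes a :: "nat \<Rightarrow> real"
  assumes rec: "\<And>n. n \<ge> n0 \<Longrightarrow>
      a n = toll (real n) + 6 / (real n ^ 2 * (real n - 1)) * weighted_sum a n"
    and "n0 \<ge> 2" and "n \<ge> n0"
  shows "second_order_rec n (a n) (a (n + 1)) (a (n + 2))"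
proof -
  have scaled_a: "scaled (a k) (real k) = weighted_sum a k" if "k \<ge> n0" for k
    using rec[OF that] that \<open>n0 \<ge> 2\<close> unfolding scaled_def by (simp add: field_simps)
  show ?thesis
    using weighted_sum_second_difference[of a n] scaled_a[of n] scaled_a[of "n + 1"]
      scaled_a[of "n + 2"] \<open>n \<ge> n0\<close>
    unfolding second_order_rec_def by (simp add: add_ac)
qed

lemma scaled_inj: "m > 1 \<Longrightarrow> scaled x m = scaled y m \<Longrightarrow> x = y"
  unfolding scaled_def by (simp add: power2_eq_square)

lemma second_order_rec_determines:
  "second_order_rec n u v w \<Longrightarrow> second_order_rec n u v w' \<Longrightarrow> w = w'"
  unfolding second_order_rec_def by (rule scaled_inj[of "real n + 2"]) auto

lemma second_order_recurrence_unique: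
  fixes x y :: "nat \<Rightarrow> 'a"
  assumes rec_x: "\<And>n. n \<ge> n0 \<Longrightarrow> R n (x n) (x (n + 1)) (x (n + 2))"
    and rec_y: "\<And>n. n \<ge> n0 \<Longrightarrow> R n (y n) (y (n + 1)) (y (n + 2))"
    and determ: "\<And>n u v w w'. R n u v w \<Longrightarrow> R n u v w' \<Longrightarrow> w = w'"
    and start: "x n0 = y n0" "x (n0 + 1) = y (n0 + 1)"
    and "n \<ge> n0"
  shows "x n = y n"
proof -
  have "x (n0 + k) = y (n0 + k) \<and> x (n0 + k + 1) = y (n0 + k + 1)" for k
  proof (induction k)
    case 0
    then show ?case using start by simp
  next
    case (Suc k)
    have "R (n0 + k) (x (n0 + k)) (x (n0 + k + 1)) (y (n0 + k + 2))"
      using rec_y[of "n0 + k"] Suc.IH by simp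
    from determ[OF rec_x[OF le_add1] this] have "x (n0 + k + 2) = y (n0 + k + 2)" .
    then show ?case using Suc.IH by simp
  qed
  from this[of "n - n0"] show ?thesis using \<open>n \<ge> n0\<close> by simp
qed

text \<open>The algebraic heart: the closed form satisfies the second-order recurrence,
  where the harmonic numbers at m + 1 and m + 2 are obtained from h by adding
  1/(m+1) and 1/(m+2).\<close>
lemma closed_form_scaled_identity:
  fixes m h :: real
  assumes "m > 0"
  shows "scaled (closed_form (m + 2) (h + 1/(m + 1) + 1/(m + 2))) (m + 2)
         - 2 * scaled (closed_form (m + 1) (h + 1/(m + 1))) (m + 1)
         + scaled (closed_form m h) m = m * closed_form m h"
proof -
  have scaled_closed: "scaled (closed_form x H) x =
      (19/6 * x^2 - 37/5 * H * (x + 1) + 1183/100 * x - 71/300 - x * toll x) * x * (x - 1) / 6"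
    if "x \<noteq> 0" for x H
    using that unfolding scaled_def closed_form_def by (simp add: field_simps power2_eq_square)
  have times_closed: "m * closed_form m h =
      19/6 * m^2 - 37/5 * h * (m + 1) + 1183/100 * m - 71/300"
    using assms unfolding closed_form_def by (simp add: field_simps power2_eq_square)
  define k where "k = 1/(m + 1)"
  define j where "j = 1/(m + 2)"
  have k: "k * (m + 1) = 1" and j: "j * (m + 2) = 1"
    using assms by (auto simp: k_def j_def)
  have nonzero: "m \<noteq> 0" "m + 1 \<noteq> 0" "m + 2 \<noteq> 0"
    using assms by auto
  show ?thesis
    unfolding scaled_closed[OF nonzero(1)] scaled_closed[OF nonzero(2)]
      scaled_closed[OF nonzero(3)] times_closed k_def[symmetric] j_def[symmetric] toll_def
    using k j by algebra
qed

lemma closed_form_second_order_rec: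
  assumes "n \<ge> 1"
  shows "second_order_rec n (closed_form (real n) (harm n))
           (closed_form (real (n + 1)) (harm (n + 1)))
           (closed_form (real (n + 2)) (harm (n + 2)))"
proof -
  have h1: "harm (n + 1) = harm n + 1/(real n + 1)"
    using harm_Suc[where 'a=real, of n] by (simp add: inverse_eq_divide add_ac)
  have h2: "harm (n + 2) = harm n + 1/(real n + 1) + 1/(real n + 2)"
    using harm_Suc[where 'a=real, of "n + 1"] h1 by (simp add: inverse_eq_divide add_ac)
  show ?thesis
    using closed_form_scaled_identity[of "real n" "harm n"] assms
    unfolding second_order_rec_def h1 h2 by (simp add: add_ac)
qed

text \<open>The harmonic numbers grow only logarithmically.\<close>
lemma harm_over_n_tendsto_0: "(\<lambda>n. harm n / real n) \<longlonglongrightarrow> 0"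
proof -
  have "(\<lambda>n. (harm n - ln (real n)) * (1 / real n) + ln (real n) / real n)
          \<longlonglongrightarrow> euler_mascheroni * 0 + 0"
    by (intro tendsto_add tendsto_mult euler_mascheroni_LIMSEQ) real_asymp+
  then show ?thesis by (simp add: diff_divide_distrib)
qed

lemma closed_form_asymp:
  "(\<lambda>n. closed_form (real n) (harm n)) \<sim>[at_top] (\<lambda>n. 19/6 * real n)"
proof (rule asymp_equivI')
  let ?q = "\<lambda>n. harm n / real n" and ?r = "\<lambda>n. 1 / real n :: real"
  have "(\<lambda>n. 1 - 222/95 * ?q n + 3549/950 * ?r n - 222/95 * ?q n * ?r n - 71/950 * ?r n * ?r n)
          \<longlonglongrightarrow> 1 - 222/95 * 0 + 3549/950 * 0 - 222/95 * 0 * 0 - 71/950 * 0 * 0"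
    by (intro tendsto_intros harm_over_n_tendsto_0 lim_const_over_n)
  moreover have "\<forall>\<^sub>F n in sequentially.
      1 - 222/95 * ?q n + 3549/950 * ?r n - 222/95 * ?q n * ?r n - 71/950 * ?r n * ?r n
      = closed_form (real n) (harm n) / (19/6 * real n)"
    using eventually_gt_at_top[of 0]
    by eventually_elim (simp add: closed_form_def field_simps power2_eq_square)
  ultimately show "(\<lambda>n. closed_form (real n) (harm n) / (19/6 * real n)) \<longlonglongrightarrow> 1"
    by (simp add: Lim_transform_eventually)
qed

theorem proposition5p1:
  fixes a :: "nat \<Rightarrow> real"
  assumes a0: "a 0 = 0" and a1: "a 1 = 0" and a2: "a 2 = 1"
    and rec: "\<And>n. n \<ge> 3 \<Longrightarrow>
       a n = 19/12 * (real n + 1) - 3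
             + 6 / (real n ^ 2 * (real n - 1)) *
               (\<Sum>p=1..n. (real p - 1) * (real n - real p) * a (p - 1))"
  shows "(\<forall>n\<ge>4. a n = 19/6 * real n - 37/5 * harm n + 1183/100
                     - 37/5 * harm n / real n - 71/300 * (1 / real n))
         \<and> a \<sim>[at_top] (\<lambda>n. 19/6 * real n)"
proof -
  define F where "F n = closed_form (real n) (harm n)" for n
  have rec_weighted: "a n = toll (real n) + 6 / (real n ^ 2 * (real n - 1)) * weighted_sum a n"
    if "n \<ge> 3" for n
    using rec[OF that] unfolding recurrence_sum_eq_weighted_sum toll_def .
  have a_rec: "second_order_rec n (a n) (a (n + 1)) (a (n + 2))" if "n \<ge> 3" for n
    using full_history_second_order_rec[of 3 a n] rec_weighted that by simp
  have a3: "a 3 = 10/3"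
    using rec_weighted[of 3] by (simp add: weighted_sum_def numeral_3_eq_3 a0 a1[simplified] a2 toll_def)
  have "a 4 = 31/6"
    using rec_weighted[of 4] a3
    by (simp add: weighted_sum_def eval_nat_numeral a0 a1[simplified] a2[unfolded numeral_2_eq_2]
        toll_def)
  then have a4: "a 4 = F 4"
    by (simp add: F_def closed_form_def harm_expand)
  have "scaled (a 5) 5 = scaled (F 5) 5"
    using a_rec[of 3] a3 a4
    by (simp add: second_order_rec_def F_def scaled_def closed_form_def harm_expand toll_def)
  then have a5: "a 5 = F 5"
    by (rule scaled_inj[rotated]) simp
  have F_rec: "second_order_rec n (F n) (F (n + 1)) (F (n + 2))" if "n \<ge> 4" for n
    unfolding F_def using closed_form_second_order_rec that by simp
  have closed: "a n = F n" if "n \<ge> 4" for n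
    using second_order_recurrence_unique[of 4 second_order_rec a F n] a_rec F_rec
      second_order_rec_determines a4 a5 that by simp
  have "a \<sim>[at_top] F"
    using closed by (intro asymp_equiv_refl_ev) (auto simp: eventually_at_top_linorder)
  then show ?thesis
    using closed closed_form_asymp asymp_equiv_trans
    unfolding F_def closed_form_def by blast
qed

end
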